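(* There is an absolute constant $C$ such that for every simple temporal clique on $n$ vertices and every backward fireworks cover $S^+_T$ of it (for any outcome of the arbitrary choices in the construction), $|S^+_T|\le \frac{3}{4}\binom{n}{2}+Cn$.
   Context: A simple temporal clique is a pair $\mathcal{G}=(G,\lambda)$ where $G=(V,E)$ is the complete graph on a finite set $V$ of $n$ vertices and $\lambda:E\to\mathbb{N}$ assigns to each edge a single integer label such that any two distinct edges sharing an endpoint have different labels; the label of an arc $(x,y)$ is $\lambda(\{x,y\})$. For a vertex $v$, $e^+(v)$ is the edge incident to $v$ with largest label. Backward construction: let $E^+$ be the set of arcs $(v,u)$ with $\{u,v\}=e^+(v)$, except that if $e^+(u)=e^+(v)=\{u,v\}$ only one of the two arcs $(u,v),(v,u)$ is included (arbitrarily). Initialize $E^+_T:=E^+$. For every vertex $v$ of in-degree at least $2$ in $(V,E^+)$, let $(u_1,v),\dots,(u_\ell,v)$ be its in-arcs in $E^+$, where $(u_\ell,v)$ has the smallest label; for each $i<\ell$, if $u_i$ has in-degree $0$ in $(V,E^+)$, replace $(u_i,v)$ by $(v,u_i)$ in $E^+_T$, and otherwise remove $(u_i,v)$ from $E^+_T$. A collector is a vertex of in-degree $0$ in $(V,E^+_T)$. The backward fireworks cover is $S^+_T=\{\{u,v\}\in E:(u,v)\in E^+_T\}\cup\{\{u,v\}\in E: u \text{ is a collector}\}$. *)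

theory Defs
  imports Complex_Main
begin

text \<open>Simple temporal clique on vertex set V: the complete graph on V with
  one label per edge (edges are 2-element sets), locally injective.\<close>
definition simple_temporal_clique :: "nat set \<Rightarrow> (nat set \<Rightarrow> nat) \<Rightarrow> bool" where
  "simple_temporal_clique V lab \<longleftrightarrow> finite V \<and>
     (\<forall>u\<in>V. \<forall>v\<in>V. \<forall>w\<in>V. u \<noteq> v \<and> u \<noteq> w \<and> v \<noteq> w \<longrightarrow> lab {u,v} \<noteq> lab {u,w})"

definition top_edge :: "nat set \<Rightarrow> (nat set \<Rightarrow> nat) \<Rightarrow> nat \<Rightarrow> nat \<Rightarrow> bool" where
  "top_edge V lab v u \<longleftrightarrow> v \<in> V \<and> u \<in> V \<and> u \<noteq> v \<and>
     (\<forall>x\<in>V. x \<noteq> v \<and> x \<noteq> u \<longrightarrow> lab {v,x} < lab {v,u})"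

text \<open>Ep is a valid outcome of the construction of E^+ (including the arbitrary
  choice of one arc for each mutual pair e^+(u) = e^+(v) = {u,v}).\<close>
definition backward_arcs :: "nat set \<Rightarrow> (nat set \<Rightarrow> nat) \<Rightarrow> (nat \<times> nat) set \<Rightarrow> bool" where
  "backward_arcs V lab Ep \<longleftrightarrow>
     (\<forall>(a,b)\<in>Ep. top_edge V lab a b) \<and>
     (\<forall>v\<in>V. \<forall>u. top_edge V lab v u \<longrightarrow> (v,u) \<in> Ep \<or> (top_edge V lab u v \<and> (u,v) \<in> Ep)) \<and>
     (\<forall>u v. (u,v) \<in> Ep \<longrightarrow> (v,u) \<notin> Ep)"

definition indeg :: "(nat \<times> nat) set \<Rightarrow> nat \<Rightarrow> nat" where
  "indeg A v = card {u. (u,v) \<in> A}"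

definition min_in_arc :: "(nat set \<Rightarrow> nat) \<Rightarrow> (nat \<times> nat) set \<Rightarrow> nat \<Rightarrow> nat \<Rightarrow> bool" where
  "min_in_arc lab Ep u v \<longleftrightarrow> (u,v) \<in> Ep \<and> (\<forall>w. (w,v) \<in> Ep \<longrightarrow> lab {u,v} \<le> lab {w,v})"

definition ET :: "(nat set \<Rightarrow> nat) \<Rightarrow> (nat \<times> nat) set \<Rightarrow> (nat \<times> nat) set" where
  "ET lab Ep =
     {(u,v). (u,v) \<in> Ep \<and> (indeg Ep v < 2 \<or> min_in_arc lab Ep u v)} \<union>
     {(v,u). (u,v) \<in> Ep \<and> indeg Ep v \<ge> 2 \<and> \<not> min_in_arc lab Ep u v \<and> indeg Ep u = 0}"

definition collector :: "nat set \<Rightarrow> (nat set \<Rightarrow> nat) \<Rightarrow> (nat \<times> nat) set \<Rightarrow> nat \<Rightarrow> bool" where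
  "collector V lab Ep v \<longleftrightarrow> v \<in> V \<and> (\<forall>u. (u,v) \<notin> ET lab Ep)"

definition fireworks_cover :: "nat set \<Rightarrow> (nat set \<Rightarrow> nat) \<Rightarrow> (nat \<times> nat) set \<Rightarrow> nat set set" where
  "fireworks_cover V lab Ep =
     {{u,v} | u v. (u,v) \<in> ET lab Ep} \<union>
     {{u,v} | u v. collector V lab Ep u \<and> v \<in> V \<and> v \<noteq> u}"

end

theory Submission
  imports Defs
begin

text \<open>A collector has no in-arc in E^+, because the minimal in-arc of every vertex survives
  in E^+_T; so its top edge is its own arc of E^+, pointing to a non-collector. Two collectors
  cannot point to the same vertex v: both have in-degree 0, so the one whose arc is not the
  minimal in-arc of v would have been reversed into an in-arc. Hence at most n/2 vertices are
  collectors, and the edges at collectors number at most binom(n,2) - binom(n/2,2), which is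
  (3/4) binom(n,2) + O(n). The other edges of the cover come from E^+_T, contained in E^+ and
  its converse, hence at most 2n of them, as every vertex has out-degree at most 1 in E^+.\<close>

lemma simple_temporal_clique_finite:
  "simple_temporal_clique V lab \<Longrightarrow> finite V"
  unfolding simple_temporal_clique_def by simp

lemma simple_temporal_clique_labels_distinct:
  assumes "simple_temporal_clique V lab" "u \<in> V" "v \<in> V" "w \<in> V" "u \<noteq> v" "u \<noteq> w" "v \<noteq> w"
  shows "lab {u,v} \<noteq> lab {u,w}"
  using assms unfolding simple_temporal_clique_def by blast

lemma top_edge_exists:
  assumes stc: "simple_temporal_clique V lab" and w: "w \<in> V" and two: "card V \<ge> 2"
  obtains u where "top_edge V lab w u"
proof -
  have fin: "finite (V - {w})" using simple_temporal_clique_finite[OF stc] by simp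
  have "V - {w} \<noteq> {}"
  proof
    assume "V - {w} = {}"
    then have "V = {w}" using w by blast
    then show False using two by simp
  qed
  then obtain u where u: "u \<in> V - {w}" and max: "Max ((\<lambda>x. lab {w,x}) ` (V - {w})) = lab {w,u}"
    using obtains_MAX[OF fin] by blast
  have "lab {w,x} < lab {w,u}" if "x \<in> V" "x \<noteq> w" "x \<noteq> u" for x
  proof -
    have "lab {w,x} \<le> lab {w,u}" using that fin max by (metis DiffI Max_ge finite_imageI image_eqI singletonD)
    moreover have "lab {w,x} \<noteq> lab {w,u}"
      using simple_temporal_clique_labels_distinct[OF stc w] that u by blast
    ultimately show ?thesis by simp
  qed
  then have "top_edge V lab w u" using u w unfolding top_edge_def by blast
  then show ?thesis by (rule that)
qed

lemma backward_arcs_top_edge: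
  "backward_arcs V lab Ep \<Longrightarrow> (u,v) \<in> Ep \<Longrightarrow> top_edge V lab u v"
  unfolding backward_arcs_def by blast

lemma backward_arcs_in_V:
  assumes "backward_arcs V lab Ep" "(u,v) \<in> Ep"
  shows "u \<in> V" "v \<in> V" "u \<noteq> v"
  using backward_arcs_top_edge[OF assms] unfolding top_edge_def by auto

lemma backward_arcs_out_unique:
  assumes "backward_arcs V lab Ep" "(u,v) \<in> Ep" "(u,v') \<in> Ep"
  shows "v = v'"
proof (rule ccontr)
  assume "v \<noteq> v'"
  then have "lab {u,v'} < lab {u,v}" "lab {u,v} < lab {u,v'}"
    using backward_arcs_top_edge[OF assms(1,2)] backward_arcs_top_edge[OF assms(1,3)]
    unfolding top_edge_def by auto
  then show False by simp
qed

lemma backward_arcs_top_edge_at: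
  assumes "backward_arcs V lab Ep" "top_edge V lab v u"
  shows "(v,u) \<in> Ep \<or> (u,v) \<in> Ep"
  using assms unfolding backward_arcs_def top_edge_def by blast

lemma card_backward_arcs_le:
  assumes fin: "finite V" and ba: "backward_arcs V lab Ep"
  shows "finite Ep" "card Ep \<le> card V"
proof -
  have inj: "inj_on fst Ep"
    using backward_arcs_out_unique[OF ba] by (intro inj_onI) (metis prod.collapse)
  have sub: "fst ` Ep \<subseteq> V" using backward_arcs_in_V[OF ba] by auto
  show "finite Ep" using inj sub fin by (meson finite_imageD finite_subset)
  show "card Ep \<le> card V" using card_inj_on_le[OF inj sub fin] .
qed

lemma card_ET_le:
  assumes fin: "finite V" and ba: "backward_arcs V lab Ep"
  shows "finite (ET lab Ep)" "card (ET lab Ep) \<le> 2 * card V"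
proof -
  note Ep = card_backward_arcs_le[OF fin ba]
  have sub: "ET lab Ep \<subseteq> Ep \<union> converse Ep" unfolding ET_def by auto
  then show "finite (ET lab Ep)" using Ep(1) by (meson finite_Un finite_converse finite_subset)
  have "card (ET lab Ep) \<le> card (Ep \<union> converse Ep)" using sub Ep(1) by (intro card_mono) auto
  also have "\<dots> \<le> card Ep + card (converse Ep)" by (rule card_Un_le)
  finally show "card (ET lab Ep) \<le> 2 * card V" using Ep(2) by simp
qed

lemma min_in_arc_exists:
  assumes "(u,v) \<in> Ep"
  obtains u0 where "min_in_arc lab Ep u0 v"
  using ex_has_least_nat[of "\<lambda>x. (x,v) \<in> Ep" u "\<lambda>x. lab {x,v}"] assms
  unfolding min_in_arc_def by blast

lemma collector_no_in_arc:
  assumes "collector V lab Ep w"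
  shows "(u,w) \<notin> Ep"
proof
  assume "(u,w) \<in> Ep"
  then obtain u0 where "min_in_arc lab Ep u0 w" by (rule min_in_arc_exists)
  then have "(u0,w) \<in> ET lab Ep" unfolding ET_def min_in_arc_def by blast
  then show False using assms unfolding collector_def by blast
qed

lemma collector_has_out_arc:
  assumes stc: "simple_temporal_clique V lab" and ba: "backward_arcs V lab Ep"
    and c: "collector V lab Ep w" and two: "card V \<ge> 2"
  shows "\<exists>v. (w,v) \<in> Ep"
proof -
  have "w \<in> V" using c unfolding collector_def by blast
  then obtain u where "top_edge V lab w u" using top_edge_exists[OF stc _ two] by blast
  then show ?thesis
    using backward_arcs_top_edge_at[OF ba] collector_no_in_arc[OF c] by blast
qed

lemma collector_out_arcs_inj:
  assumes stc: "simple_temporal_clique V lab" and ba: "backward_arcs V lab Ep"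
    and c1: "collector V lab Ep w1" and c2: "collector V lab Ep w2"
    and a1: "(w1,v) \<in> Ep" and a2: "(w2,v) \<in> Ep"
  shows "w1 = w2"
proof (rule ccontr)
  assume ne: "w1 \<noteq> w2"
  have "finite {x. (x,v) \<in> Ep}"
    by (rule finite_subset[OF _ simple_temporal_clique_finite[OF stc]])
      (auto dest: backward_arcs_in_V(1)[OF ba])
  then have "card {w1,w2} \<le> indeg Ep v" unfolding indeg_def using a1 a2 by (intro card_mono) auto
  then have two_in: "indeg Ep v \<ge> 2" using ne by simp
  have "min_in_arc lab Ep w v" if c: "collector V lab Ep w" and a: "(w,v) \<in> Ep" for w
  proof (rule ccontr)
    assume "\<not> min_in_arc lab Ep w v"
    moreover have "indeg Ep w = 0" using collector_no_in_arc[OF c] unfolding indeg_def by simp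
    ultimately have "(v,w) \<in> ET lab Ep" unfolding ET_def using a two_in by blast
    then show False using c unfolding collector_def by blast
  qed
  then have "lab {w1,v} = lab {w2,v}"
    using c1 c2 a1 a2 unfolding min_in_arc_def by (meson antisym)
  moreover have "lab {v,w1} \<noteq> lab {v,w2}"
    using simple_temporal_clique_labels_distinct[OF stc] backward_arcs_in_V[OF ba a1]
      backward_arcs_in_V[OF ba a2] ne by blast
  ultimately show False by (simp add: insert_commute)
qed

lemma card_collectors_le:
  assumes stc: "simple_temporal_clique V lab" and ba: "backward_arcs V lab Ep" and two: "card V \<ge> 2"
  defines "K \<equiv> {w. collector V lab Ep w}"
  shows "card K \<le> card (V - K)"
proof -
  obtain h where h: "\<And>w. w \<in> K \<Longrightarrow> (w, h w) \<in> Ep"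
    using collector_has_out_arc[OF stc ba _ two] unfolding K_def by (metis mem_Collect_eq)
  have "inj_on h K"
    using collector_out_arcs_inj[OF stc ba] h unfolding K_def by (intro inj_onI) (metis mem_Collect_eq)
  moreover have "h ` K \<subseteq> V - K"
    using backward_arcs_in_V(2)[OF ba] collector_no_in_arc h unfolding K_def by blast
  ultimately show ?thesis
    using card_inj_on_le simple_temporal_clique_finite[OF stc] by blast
qed

definition pairs_meeting :: "'a set \<Rightarrow> 'a set \<Rightarrow> 'a set set" where
  "pairs_meeting V K = {{u,v} | u v. u \<in> K \<and> v \<in> V \<and> v \<noteq> u}"

lemma card_pairs_meeting:
  assumes "finite V" "K \<subseteq> V"
  shows "card (pairs_meeting V K) = (card V choose 2) - (card (V - K) choose 2)"
proof -
  have "pairs_meeting V K = {B. B \<subseteq> V \<and> card B = 2} - {B. B \<subseteq> V - K \<and> card B = 2}"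
    using assms(2) unfolding pairs_meeting_def by (auto simp: card_2_iff)
  also have "card \<dots> = card {B. B \<subseteq> V \<and> card B = 2} - card {B. B \<subseteq> V - K \<and> card B = 2}"
    using assms(1) by (intro card_Diff_subset) auto
  finally show ?thesis using assms(1) by (simp add: n_subsets)
qed

lemma real_choose_two: "real (n choose 2) = real n * (real n - 1) / 2"
proof -
  have "even (n * (n - 1))" by auto
  then have "2 * (n choose 2) = n * (n - 1)"
    unfolding choose_two by simp
  then have "2 * real (n choose 2) = real n * real (n - 1)"
    by (metis of_nat_mult of_nat_numeral)
  then show ?thesis by (cases n) auto
qed

lemma choose_two_diff_le:
  assumes "m \<le> n" "n \<le> 2 * m"
  shows "real (n choose 2) - real (m choose 2) \<le> 3/4 * real (n choose 2) + real n"
proof -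
  have "real n / 2 * (real n / 2) \<le> real m * real m"
    using assms(2) by (intro mult_mono) auto
  then show ?thesis using assms(1) unfolding real_choose_two by (simp add: field_simps)
qed

lemma card_collector_pairs_le:
  assumes stc: "simple_temporal_clique V lab" and ba: "backward_arcs V lab Ep"
  shows "real (card (pairs_meeting V {w. collector V lab Ep w}))
    \<le> 3/4 * real (card V choose 2) + real (card V)"
proof -
  define K where "K = {w. collector V lab Ep w}"
  have fin: "finite V" using simple_temporal_clique_finite[OF stc] .
  have KV: "K \<subseteq> V" unfolding K_def collector_def by blast
  have card_V: "card V = card K + card (V - K)"
    using card_Diff_subset[OF finite_subset[OF KV fin] KV] card_mono[OF fin KV] by simp
  have "card (V - K) choose 2 \<le> card V choose 2"
    using card_V by (intro binomial_right_mono) simp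
  then have "real (card (pairs_meeting V K)) = real (card V choose 2) - real (card (V - K) choose 2)"
    using card_pairs_meeting[OF fin KV] by simp
  also have "\<dots> \<le> 3/4 * real (card V choose 2) + real (card V)"
  proof (cases "card V \<ge> 2")
    case True
    then show ?thesis
      using card_collectors_le[OF stc ba] card_V by (intro choose_two_diff_le) (auto simp: K_def)
  next
    case False
    then show ?thesis using card_V by (simp add: binomial_eq_0)
  qed
  finally show ?thesis unfolding K_def .
qed

theorem theorem5:
  shows "\<exists>C::real. \<forall>(V::nat set) (lab::nat set \<Rightarrow> nat) (Ep::(nat \<times> nat) set).
           simple_temporal_clique V lab \<longrightarrow> backward_arcs V lab Ep \<longrightarrow>
           real (card (fireworks_cover V lab Ep))
             \<le> 3/4 * real (card V choose 2) + C * real (card V)"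
proof (intro exI allI impI)
  fix V :: "nat set" and lab Ep
  assume stc: "simple_temporal_clique V lab" and ba: "backward_arcs V lab Ep"
  note ET = card_ET_le[OF simple_temporal_clique_finite[OF stc] ba]
  have "fireworks_cover V lab Ep
      = (\<lambda>(u,v). {u,v}) ` ET lab Ep \<union> pairs_meeting V {w. collector V lab Ep w}"
    unfolding fireworks_cover_def pairs_meeting_def by auto
  then have "card (fireworks_cover V lab Ep)
      \<le> card ((\<lambda>(u,v). {u,v}) ` ET lab Ep) + card (pairs_meeting V {w. collector V lab Ep w})"
    by (simp add: card_Un_le)
  moreover have "card ((\<lambda>(u,v). {u,v}) ` ET lab Ep) \<le> card (ET lab Ep)"
    by (rule card_image_le[OF ET(1)])
  ultimately show "real (card (fireworks_cover V lab Ep))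
      \<le> 3/4 * real (card V choose 2) + 3 * real (card V)"
    using ET(2) card_collector_pairs_le[OF stc ba] by linarith
qed

end
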